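(* Let $m\ge2$ and let $\mathcal W\subseteq\mathcal S_m$ be such that the graph $\mathcal G(\mathcal W)$ is a tree. Let $\mathcal B=\mathcal S_m\setminus\mathcal W$. Then from every $B\in\mathcal B$ there is a path in $\mathcal G(\mathcal B)$ from $B$ to a border quadrilateral (which lies in $\mathcal B$).
   Context: Let $Q$ be a convex quadrilateral in $\mathbb{R}^2$. Divide $Q$ into two triangles by its shorter diagonal (either diagonal if they have equal length). Label the vertices $Q_1,Q_2,Q_3,Q_4$ anticlockwise, starting at an endpoint of that diagonal, so that the diagonal is $Q_1Q_3$. For an integer $m\ge2$, define the following index sets: - $A_1=\{(k_1,k_2,k_3,0)\in\mathbb{Z}_{\ge0}^4:k_1+k_2+k_3=m-1,\ k_2\ne0\}$, - $A_2=\{(k_1,0,k_3,k_4)\in\mathbb{Z}_{\ge0}^4:k_1+k_3+k_4=m-1,\ k_4\ne0\}$, - $A_3=\{(k_1,0,k_3,0)\in\mathbb{Z}_{\ge0}^4:k_1+k_3=m-1\}$, - $A=A_1\cup A_2\cup A_3$. For $k\in A$, let $S_m(k)$ be the quadrilateral with ordered vertices $R_1R_2R_3R_4$ given below. - If $k\in A_1$: $R_1=\frac{(k_1+1)Q_1+k_2Q_2+k_3Q_3}{m}$, $R_2=\frac{k_1Q_1+(k_2+1)Q_2+k_3Q_3}{m}$, $R_3=\frac{k_1Q_1+k_2Q_2+(k_3+1)Q_3}{m}$, $R_4=\frac{(k_1+1)Q_1+(k_2-1)Q_2+(k_3+1)Q_3}{m}$. - If $k\in A_2$: $R_1=\frac{(k_1+1)Q_1+k_3Q_3+k_4Q_4}{m}$,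 $R_2=\frac{(k_1+1)Q_1+(k_3+1)Q_3+(k_4-1)Q_4}{m}$, $R_3=\frac{k_1Q_1+(k_3+1)Q_3+k_4Q_4}{m}$, $R_4=\frac{k_1Q_1+k_3Q_3+(k_4+1)Q_4}{m}$. - If $k\in A_3$: $R_1=\frac{(k_1+1)Q_1+k_3Q_3}{m}$, $R_2=\frac{k_1Q_1+Q_2+k_3Q_3}{m}$, $R_3=\frac{k_1Q_1+(k_3+1)Q_3}{m}$, $R_4=\frac{k_1Q_1+k_3Q_3+Q_4}{m}$. Let $\mathcal S_m=\{S_m(k):k\in A\}$; these quadrilaterals tile $Q$. A border quadrilateral is an element of $\mathcal S_m$ having a side contained in the boundary of $Q$. For $\mathcal W\subseteq\mathcal S_m$, the graph $\mathcal G(\mathcal W)$ has vertex set $\mathcal W$, with two elements adjacent iff they have a common side. For $\mathcal B\subseteq\mathcal S_m$, the graph $\mathcal G(\mathcal B)$ has vertex set $\mathcal B$, with two elements adjacent iff they have a common side or a common vertex. *)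

theory Defs
  imports "HOL-Analysis.Analysis"
begin

type_synonym pt = "real \<times> real"
type_synonym quad = "pt list"   (* ordered vertices R1 R2 R3 R4, length 4 *)

definition cross2 :: "pt \<Rightarrow> pt \<Rightarrow> real" where
  "cross2 u v = fst u * snd v - snd u * fst v"

definition convex_quad_ccw :: "(nat \<Rightarrow> pt) \<Rightarrow> bool" where
  "convex_quad_ccw Q \<longleftrightarrow>
     cross2 (Q 2 - Q 1) (Q 3 - Q 2) > 0 \<and> cross2 (Q 3 - Q 2) (Q 4 - Q 3) > 0 \<and>
     cross2 (Q 4 - Q 3) (Q 1 - Q 4) > 0 \<and> cross2 (Q 1 - Q 4) (Q 2 - Q 1) > 0"

definition quadA1 :: "nat \<Rightarrow> (nat \<times> nat \<times> nat \<times> nat) set" where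
  "quadA1 m = {(k1,k2,k3,k4). k4 = 0 \<and> k1 + k2 + k3 = m - 1 \<and> k2 \<noteq> 0}"
definition quadA2 :: "nat \<Rightarrow> (nat \<times> nat \<times> nat \<times> nat) set" where
  "quadA2 m = {(k1,k2,k3,k4). k2 = 0 \<and> k1 + k3 + k4 = m - 1 \<and> k4 \<noteq> 0}"
definition quadA3 :: "nat \<Rightarrow> (nat \<times> nat \<times> nat \<times> nat) set" where
  "quadA3 m = {(k1,k2,k3,k4). k2 = 0 \<and> k4 = 0 \<and> k1 + k3 = m - 1}"
definition quadA :: "nat \<Rightarrow> (nat \<times> nat \<times> nat \<times> nat) set" where
  "quadA m = quadA1 m \<union> quadA2 m \<union> quadA3 m"

definition bpt :: "nat \<Rightarrow> (nat \<Rightarrow> pt) \<Rightarrow> nat \<Rightarrow> nat \<Rightarrow> nat \<Rightarrow> nat \<Rightarrow> pt" where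
  "bpt m Q a b c d = (1 / real m) *\<^sub>R
     (real a *\<^sub>R Q 1 + real b *\<^sub>R Q 2 + real c *\<^sub>R Q 3 + real d *\<^sub>R Q 4)"

text \<open>S_m(k); the three cases A1 (k2 \<noteq> 0), A2 (k4 \<noteq> 0), A3 (k2 = k4 = 0) are disjoint on A.\<close>
definition Squad :: "nat \<Rightarrow> (nat \<Rightarrow> pt) \<Rightarrow> nat \<times> nat \<times> nat \<times> nat \<Rightarrow> quad" where
  "Squad m Q k = (case k of (k1,k2,k3,k4) \<Rightarrow>
     if k \<in> quadA1 m then
       [bpt m Q (k1+1) k2 k3 0, bpt m Q k1 (k2+1) k3 0, bpt m Q k1 k2 (k3+1) 0,
        bpt m Q (k1+1) (k2-1) (k3+1) 0]
     else if k \<in> quadA2 m then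
       [bpt m Q (k1+1) 0 k3 k4, bpt m Q (k1+1) 0 (k3+1) (k4-1), bpt m Q k1 0 (k3+1) k4,
        bpt m Q k1 0 k3 (k4+1)]
     else
       [bpt m Q (k1+1) 0 k3 0, bpt m Q k1 1 k3 0, bpt m Q k1 0 (k3+1) 0, bpt m Q k1 0 k3 1])"

definition Sset :: "nat \<Rightarrow> (nat \<Rightarrow> pt) \<Rightarrow> quad set" where
  "Sset m Q = Squad m Q ` quadA m"

definition side :: "quad \<Rightarrow> nat \<Rightarrow> pt set" where
  "side q i = closed_segment (q ! i) (q ! (Suc i mod 4))"

definition common_side :: "quad \<Rightarrow> quad \<Rightarrow> bool" where
  "common_side q r \<longleftrightarrow> (\<exists>i<4. \<exists>j<4. side q i = side r j)"

definition common_vertex :: "quad \<Rightarrow> quad \<Rightarrow> bool" where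
  "common_vertex q r \<longleftrightarrow> (\<exists>i<4. \<exists>j<4. q ! i = r ! j)"

definition border_quad :: "nat \<Rightarrow> (nat \<Rightarrow> pt) \<Rightarrow> quad \<Rightarrow> bool" where
  "border_quad m Q q \<longleftrightarrow> q \<in> Sset m Q \<and>
     (\<exists>i<4. side q i \<subseteq> frontier (convex hull {Q 1, Q 2, Q 3, Q 4}))"

definition adjW :: "quad \<Rightarrow> quad \<Rightarrow> bool" where
  "adjW q r \<longleftrightarrow> q \<noteq> r \<and> common_side q r"
definition adjB :: "quad \<Rightarrow> quad \<Rightarrow> bool" where
  "adjB q r \<longleftrightarrow> q \<noteq> r \<and> (common_side q r \<or> common_vertex q r)"

definition is_gpath :: "'a set \<Rightarrow> ('a \<Rightarrow> 'a \<Rightarrow> bool) \<Rightarrow> 'a list \<Rightarrow> bool" where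
  "is_gpath V E ps \<longleftrightarrow> ps \<noteq> [] \<and> set ps \<subseteq> V \<and> distinct ps \<and>
     (\<forall>i. Suc i < length ps \<longrightarrow> E (ps ! i) (ps ! Suc i))"

definition graph_connected :: "'a set \<Rightarrow> ('a \<Rightarrow> 'a \<Rightarrow> bool) \<Rightarrow> bool" where
  "graph_connected V E \<longleftrightarrow>
     (\<forall>u\<in>V. \<forall>v\<in>V. \<exists>ps. is_gpath V E ps \<and> hd ps = u \<and> last ps = v)"

definition has_cycle :: "'a set \<Rightarrow> ('a \<Rightarrow> 'a \<Rightarrow> bool) \<Rightarrow> bool" where
  "has_cycle V E \<longleftrightarrow> (\<exists>cs. 3 \<le> length cs \<and> is_gpath V E cs \<and> E (last cs) (hd cs))"

definition is_tree :: "'a set \<Rightarrow> ('a \<Rightarrow> 'a \<Rightarrow> bool) \<Rightarrow> bool" where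
  "is_tree V E \<longleftrightarrow> V \<noteq> {} \<and> graph_connected V E \<and> \<not> has_cycle V E"

end

theory Submission
  imports Defs
begin

text \<open>
  Reading S_m(k) as the cell (i, j) of an m \<times> m grid, sheared onto the two triangles
  Q1 Q2 Q3 (i < j) and Q1 Q3 Q4 (j < i), tiles with a common side become orthogonally
  adjacent cells, tiles with a common vertex become king-adjacent cells, and border tiles
  become cells on the outer ring. So it suffices that, for a finite set W of cells without
  cycles in the orthogonal adjacency, every cell outside W can leave the grid by king moves
  avoiding W. This goes by induction on W: remove a leaf w. At most one of its four
  orthogonal neighbours lies in W, so its king neighbours outside W are connected around w,
  and an escape route through w can be rerouted. Only the acyclicity of G(W) is used.
\<close>

section \<open>Paths and cycles in graphs\<close>

lemma is_gpath_mono: "is_gpath V E ps \<Longrightarrow> V \<subseteq> V' \<Longrightarrow> is_gpath V' E ps"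
  unfolding is_gpath_def by auto

lemma has_cycle_mono: "has_cycle V E \<Longrightarrow> V \<subseteq> V' \<Longrightarrow> has_cycle V' E"
  unfolding has_cycle_def using is_gpath_mono by blast

lemma is_gpath_map:
  assumes ps: "is_gpath V E ps" and f: "inj_on f V" "f ` V \<subseteq> V'"
    and E: "\<And>x y. x \<in> V \<Longrightarrow> y \<in> V \<Longrightarrow> E x y \<Longrightarrow> E' (f x) (f y)"
  shows "is_gpath V' E' (map f ps)"
proof -
  have V: "set ps \<subseteq> V" using ps by (simp add: is_gpath_def)
  then have "distinct (map f ps)"
    using ps f(1) by (simp add: is_gpath_def distinct_map inj_on_subset)
  moreover have "E' (map f ps ! i) (map f ps ! Suc i)" if "Suc i < length ps" for i
    using ps that V E[of "ps ! i" "ps ! Suc i"] by (force simp: is_gpath_def)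
  ultimately show ?thesis
    using ps V f(2) by (auto simp: is_gpath_def)
qed

lemma has_cycle_map:
  assumes "has_cycle V E" "inj_on f V" "f ` V \<subseteq> V'"
    and E: "\<And>x y. x \<in> V \<Longrightarrow> y \<in> V \<Longrightarrow> E x y \<Longrightarrow> E' (f x) (f y)"
  shows "has_cycle V' E'"
proof -
  obtain cs where cs: "3 \<le> length cs" "is_gpath V E cs" "E (last cs) (hd cs)"
    using assms(1) by (auto simp: has_cycle_def)
  have "cs \<noteq> []" "set cs \<subseteq> V" using cs by (auto simp: is_gpath_def)
  then have "E' (last (map f cs)) (hd (map f cs))"
    using E[OF _ _ cs(3)] by (simp add: last_map hd_map subset_iff)
  then show ?thesis
    using is_gpath_map[OF cs(2) assms(2,3), of E'] E cs(1) unfolding has_cycle_def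
    by (metis length_map)
qed

lemma gpath_length_le:
  "finite V \<Longrightarrow> is_gpath V E ps \<Longrightarrow> length ps \<le> card V"
  unfolding is_gpath_def by (metis card_mono distinct_card)

lemma gpath_snoc:
  assumes "is_gpath V E ps" "v \<in> V" "v \<notin> set ps" "E (last ps) v"
  shows "is_gpath V E (ps @ [v])"
  using assms unfolding is_gpath_def
  by (auto simp: nth_append last_conv_nth less_Suc_eq) (metis diff_Suc_Suc diff_zero)

lemma gpath_drop:
  assumes "is_gpath V E ps" "k < length ps"
  shows "is_gpath V E (drop k ps)"
  using assms unfolding is_gpath_def by (auto dest: in_set_dropD)

text \<open>The end of a longest path has at most one neighbour: a second one would lie on the
  path (by maximality) and close a cycle.\<close>
lemma acyclic_has_leaf:
  assumes fin: "finite V" and ne: "V \<noteq> {}" and irrefl: "\<And>x. \<not> E x x"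
    and acyclic: "\<not> has_cycle V E"
  obtains w where "w \<in> V" "\<And>u v. u \<in> V \<Longrightarrow> v \<in> V \<Longrightarrow> E w u \<Longrightarrow> E w v \<Longrightarrow> u = v"
proof -
  obtain x where "x \<in> V" using ne by blast
  then have "is_gpath V E [x]" by (simp add: is_gpath_def)
  then obtain ps where ps: "is_gpath V E ps"
    and longest: "\<And>qs. is_gpath V E qs \<Longrightarrow> length qs \<le> length ps"
    using ex_has_greatest_nat[of "is_gpath V E" "[x]" length "Suc (card V)"]
      gpath_length_le[OF fin] by (metis le_imp_less_Suc)
  have ne_ps: "ps \<noteq> []" and psV: "set ps \<subseteq> V" using ps by (auto simp: is_gpath_def)
  define w where "w = last ps"
  have neighbour_index: "\<exists>k. k + 2 = length ps \<and> u = ps ! k" if "u \<in> V" "E w u" for u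
  proof -
    have "u \<in> set ps"
      using longest[OF gpath_snoc[OF ps that(1) _ that(2)[unfolded w_def]]] by force
    then obtain k where k: "k < length ps" "u = ps ! k" by (metis in_set_conv_nth)
    have "k \<noteq> length ps - 1"
      using k irrefl that(2) ne_ps by (metis last_conv_nth w_def)
    moreover have "\<not> k + 2 < length ps"
    proof
      assume "k + 2 < length ps"
      then have "3 \<le> length (drop k ps)" "hd (drop k ps) = u" "last (drop k ps) = w"
        using k by (auto simp: hd_drop_conv_nth w_def)
      then have "has_cycle V E"
        using gpath_drop[OF ps k(1)] that(2) unfolding has_cycle_def by metis
      then show False using acyclic by contradiction
    qed
    ultimately show ?thesis using k by (intro exI[of _ k]) linarith
  qed
  show thesis
  proof (rule that)
    show "w \<in> V" using ne_ps psV w_def by auto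
    show "u = v" if "u \<in> V" "v \<in> V" "E w u" "E w v" for u v
      using neighbour_index[OF that(1,3)] neighbour_index[OF that(2,4)]
      by (metis add_right_cancel)
  qed
qed

lemma rtranclp_imp_gpath:
  assumes "R\<^sup>*\<^sup>* x y" "x \<in> V" "\<And>a b. R a b \<Longrightarrow> b \<in> V \<and> E a b"
  shows "\<exists>ps. is_gpath V E ps \<and> hd ps = x \<and> last ps = y"
  using assms(1,2)
proof (induction rule: converse_rtranclp_induct)
  case base
  then show ?case by (intro exI[of _ "[y]"]) (simp add: is_gpath_def)
next
  case (step x x')
  then obtain ps where ps: "is_gpath V E ps" "hd ps = x'" "last ps = y"
    using assms(3) by blast
  show ?case
  proof (cases "x \<in> set ps")
    case True
    then obtain k where k: "k < length ps" "ps ! k = x" by (metis in_set_conv_nth)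
    then show ?thesis
      using gpath_drop[OF ps(1) k(1)] ps(3) by (auto simp: hd_drop_conv_nth)
  next
    case False
    have "is_gpath V E (x # ps)"
      using ps False step assms(3) unfolding is_gpath_def
      by (auto simp: nth_Cons hd_conv_nth split: nat.splits)
    then show ?thesis using ps by (intro exI[of _ "x # ps"]) (auto simp: is_gpath_def)
  qed
qed

section \<open>King walks in a grid of cells\<close>

type_synonym cell = "int \<times> int"

definition grid :: "nat \<Rightarrow> cell set" where
  "grid m = {0..<int m} \<times> {0..<int m}"

text \<open>Walks may also use the ring of cells around the grid, so that leaves on the
  border of the grid can be bypassed.\<close>
definition framed_grid :: "nat \<Rightarrow> cell set" where
  "framed_grid m = {-1..int m} \<times> {-1..int m}"

definition grid_border :: "nat \<Rightarrow> cell set" where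
  "grid_border m = {c \<in> grid m. fst c \<in> {0, int m - 1} \<or> snd c \<in> {0, int m - 1}}"

definition adj4 :: "cell \<Rightarrow> cell \<Rightarrow> bool" where
  "adj4 c d \<longleftrightarrow> \<bar>fst c - fst d\<bar> + \<bar>snd c - snd d\<bar> = 1"

definition adj8 :: "cell \<Rightarrow> cell \<Rightarrow> bool" where
  "adj8 c d \<longleftrightarrow> c \<noteq> d \<and> \<bar>fst c - fst d\<bar> \<le> 1 \<and> \<bar>snd c - snd d\<bar> \<le> 1"

definition king_move :: "cell set \<Rightarrow> cell \<Rightarrow> cell \<Rightarrow> bool" where
  "king_move A c d \<longleftrightarrow> c \<in> A \<and> d \<in> A \<and> adj8 c d"

lemma finite_grid: "finite (grid m)"
  by (simp add: grid_def)

lemma adj8_sym: "adj8 c d \<Longrightarrow> adj8 d c"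
  by (auto simp: adj8_def abs_minus_commute)

lemma king_move_rtranclp_sym: "(king_move A)\<^sup>*\<^sup>* c d \<Longrightarrow> (king_move A)\<^sup>*\<^sup>* d c"
proof -
  have "symp (king_move A)" by (auto intro!: sympI simp: king_move_def adj8_sym)
  then show "(king_move A)\<^sup>*\<^sup>* c d \<Longrightarrow> (king_move A)\<^sup>*\<^sup>* d c"
    by (metis symp_rtranclp sympD)
qed

lemma king_walk_to_left_column:
  assumes "(i, j) \<in> framed_grid m"
  shows "(king_move (framed_grid m))\<^sup>*\<^sup>* (i, j) (-1, j)"
proof -
  have "-1 \<le> i" using assms by (simp add: framed_grid_def)
  then show ?thesis using assms
  proof (induction i rule: int_ge_induct)
    case (step i)
    then have "king_move (framed_grid m) (i + 1, j) (i, j)"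
      by (auto simp: king_move_def framed_grid_def adj8_def)
    moreover have "(i, j) \<in> framed_grid m" using step by (auto simp: framed_grid_def)
    ultimately show ?case using step.IH by (meson converse_rtranclp_into_rtranclp)
  qed simp
qed

lemma escape_without_obstacles:
  assumes "c \<in> framed_grid m"
  shows "\<exists>f. f \<notin> grid m \<and> (king_move (framed_grid m))\<^sup>*\<^sup>* c f"
  using assms king_walk_to_left_column[of "fst c" "snd c" m]
  by (intro exI[of _ "(-1, snd c)"]) (simp add: grid_def)

text \<open>At most one of the four orthogonal neighbours of a leaf w lies in W, so they stay
  connected around w, and every diagonal neighbour outside W touches one of them.\<close>
lemma leaf_neighbours_connected:
  assumes w: "w \<in> grid m"
    and leaf: "\<And>u v. u \<in> W \<Longrightarrow> v \<in> W \<Longrightarrow> adj4 w u \<Longrightarrow> adj4 w v \<Longrightarrow> u = v"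
    and n: "adj8 w n" "n \<notin> W" and n': "adj8 w n'" "n' \<notin> W"
  shows "(king_move (framed_grid m - W))\<^sup>*\<^sup>* n n'"
proof -
  let ?R = "king_move (framed_grid m - W)"
  obtain a b where ab: "w = (a, b)" by (cases w)
  have move: "?R x y" if "adj8 w x" "adj8 w y" "adj8 x y" "x \<notin> W" "y \<notin> W" for x y
    using that w ab by (auto simp: king_move_def framed_grid_def grid_def adj8_def mem_Times_iff)
  define orth where "orth = {(a - 1, b), (a, b + 1), (a + 1, b), (a, b - 1)}"
  have orth_adj: "adj4 w x" "adj8 w x" if "x \<in> orth" for x
    using that by (auto simp: orth_def ab adj4_def adj8_def)
  have one_in_W: "u = v" if "u \<in> orth \<inter> W" "v \<in> orth \<inter> W" for u v
    using leaf orth_adj that by blast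
  have orth_move: "?R x y" if "x \<in> orth - W" "y \<in> orth - W" "adj8 x y" for x y
    using move orth_adj that by blast
  obtain z where z: "z \<in> {(a, b + 1), (a, b - 1)} - W"
    using one_in_W[of "(a, b + 1)" "(a, b - 1)"] by (auto simp: orth_def)
  obtain z' where z': "z' \<in> {(a - 1, b), (a + 1, b)} - W"
    using one_in_W[of "(a - 1, b)" "(a + 1, b)"] by (auto simp: orth_def)
  have orth_connected: "?R\<^sup>*\<^sup>* x y" if "x \<in> orth - W" "y \<in> orth - W" for x y
  proof -
    have zs: "z \<in> orth - W" "z' \<in> orth - W" using z z' by (auto simp: orth_def)
    have "x = y \<or> adj8 x y \<or> (adj8 x z \<and> adj8 z y) \<or> (adj8 x z' \<and> adj8 z' y)"
      using that z z' unfolding orth_def by (elim DiffE insertE emptyE; simp add: adj8_def)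
    then show ?thesis
      using orth_move[OF that] orth_move[OF that(1) zs(1)] orth_move[OF zs(1) that(2)]
        orth_move[OF that(1) zs(2)] orth_move[OF zs(2) that(2)]
      by (meson converse_rtranclp_into_rtranclp r_into_rtranclp rtranclp.rtrancl_refl)
  qed
  have to_orth: "\<exists>y \<in> orth - W. ?R\<^sup>*\<^sup>* x y" if "adj8 w x" "x \<notin> W" for x
  proof -
    obtain s t where x: "x = (a + s, b + t)" by (rule that[of "fst x - a" "snd x - b"]) simp
    have st: "s \<in> {-1, 0, 1}" "t \<in> {-1, 0, 1}" "(s, t) \<noteq> (0, 0)"
      using that(1) by (auto simp: adj8_def ab x)
    show ?thesis
    proof (cases "s = 0 \<or> t = 0")
      case True
      then have "x \<in> orth" using st by (auto simp: orth_def x)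
      then show ?thesis using that by blast
    next
      case False
      then have "(a + s, b) \<in> orth" "(a, b + t) \<in> orth" "(a + s, b) \<noteq> (a, b + t)"
        using st by (auto simp: orth_def)
      then obtain y where y: "y \<in> {(a + s, b), (a, b + t)} - W" "y \<in> orth"
        using one_in_W by blast
      have "adj8 x y" using y st False by (auto simp: adj8_def x)
      then show ?thesis using y move[OF that(1) orth_adj(2)] that(2) by blast
    qed
  qed
  obtain y where y: "y \<in> orth - W" "?R\<^sup>*\<^sup>* n y" using to_orth n by blast
  obtain y' where y': "y' \<in> orth - W" "?R\<^sup>*\<^sup>* n' y'" using to_orth n' by blast
  show ?thesis
    using y orth_connected[OF y(1) y'(1)] king_move_rtranclp_sym[OF y'(2)]
    by (meson rtranclp_trans)
qed

lemma escape_around_leaf: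
  assumes w: "w \<in> grid m" "w \<in> W"
    and leaf: "\<And>u v. u \<in> W \<Longrightarrow> v \<in> W \<Longrightarrow> adj4 w u \<Longrightarrow> adj4 w v \<Longrightarrow> u = v"
    and walk: "(king_move (framed_grid m - (W - {w})))\<^sup>*\<^sup>* x f"
    and "x \<notin> W" "f \<notin> W"
  shows "(king_move (framed_grid m - W))\<^sup>*\<^sup>* x f"
proof -
  let ?R = "king_move (framed_grid m - W)"
  text \<open>Invariant along the walk: f is reachable avoiding W from its start, or, if the
    start is the leaf w, from every king neighbour of w outside W.\<close>
  have "?R\<^sup>*\<^sup>* n f" if "n \<notin> W" "n = x \<or> x = w \<and> adj8 w n" for n
    using walk that
  proof (induction arbitrary: n rule: converse_rtranclp_induct)
    case base
    then show ?case using w(2) \<open>f \<notin> W\<close> by auto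
  next
    case (step y y')
    have y: "y \<in> framed_grid m" "y' \<in> framed_grid m" "y \<notin> W - {w}" "y' \<notin> W - {w}"
      and "adj8 y y'" using step.hyps(1) by (auto simp: king_move_def)
    then have "y \<noteq> y'" by (simp add: adj8_def)
    show ?case
    proof (cases "y' = w")
      case True
      then have "n = y" using step.prems(2) \<open>y \<noteq> y'\<close> by auto
      then show ?thesis
        using step.IH[of n] step.prems(1) True adj8_sym[OF \<open>adj8 y y'\<close>] by simp
    next
      case False
      then have "?R\<^sup>*\<^sup>* y' f" using step.IH y(4) by blast
      moreover have "?R\<^sup>*\<^sup>* n y'"
      proof (cases "y = w")
        case True
        then have "adj8 w n" using step.prems w(2) by auto
        moreover have "adj8 w y'" "y' \<notin> W" using True \<open>adj8 y y'\<close> y(4) False by auto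
        ultimately show ?thesis
          using leaf_neighbours_connected[OF w(1) leaf] step.prems(1) by blast
      next
        case False
        then show ?thesis
          using step.prems y \<open>adj8 y y'\<close> \<open>y' \<noteq> w\<close> by (auto simp: king_move_def)
      qed
      ultimately show ?thesis by (rule rtranclp_trans[rotated])
    qed
  qed
  then show ?thesis using \<open>x \<notin> W\<close> by blast
qed

lemma escape_through_acyclic:
  assumes "W \<subseteq> grid m" "\<not> has_cycle W adj4" "c \<in> framed_grid m - W"
  shows "\<exists>f. f \<notin> grid m \<and> (king_move (framed_grid m - W))\<^sup>*\<^sup>* c f"
proof -
  have "finite W" using assms(1) finite_grid by (rule finite_subset)
  then show ?thesis using assms
  proof (induction W arbitrary: c rule: finite_psubset_induct)
    case (psubset W)
    show ?case
    proof (cases "W = {}")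
      case True
      then show ?thesis using escape_without_obstacles psubset.prems(3) by simp
    next
      case False
      have "\<And>x. \<not> adj4 x x" by (simp add: adj4_def)
      then obtain w where w: "w \<in> W"
        and leaf: "\<And>u v. u \<in> W \<Longrightarrow> v \<in> W \<Longrightarrow> adj4 w u \<Longrightarrow> adj4 w v \<Longrightarrow> u = v"
        using acyclic_has_leaf[OF psubset.hyps(1) False _ psubset.prems(2)] by metis
      have "\<not> has_cycle (W - {w}) adj4"
        using psubset.prems(2) has_cycle_mono[of "W - {w}" adj4 W] by blast
      then obtain f where f: "f \<notin> grid m"
        "(king_move (framed_grid m - (W - {w})))\<^sup>*\<^sup>* c f"
        using psubset.IH[of "W - {w}" c] psubset.prems w by auto
      then have "f \<notin> W" using psubset.prems(1) by blast
      moreover have "w \<in> grid m" using w psubset.prems(1) by blast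
      ultimately show ?thesis
        using escape_around_leaf[OF _ w leaf f(2)] f(1) psubset.prems(3) by blast
    qed
  qed
qed

lemma adj8_leaving_grid_imp_border:
  "x \<in> grid m \<Longrightarrow> adj8 x x' \<Longrightarrow> x' \<notin> grid m \<Longrightarrow> x \<in> grid_border m"
  by (cases x; cases x') (auto simp: grid_border_def grid_def adj8_def abs_le_iff)

lemma escape_reaches_border:
  assumes "(king_move (framed_grid m - W))\<^sup>*\<^sup>* c f" "c \<in> grid m" "f \<notin> grid m"
  shows "\<exists>y \<in> grid_border m - W. (king_move (grid m - W))\<^sup>*\<^sup>* c y"
  using assms
proof (induction rule: converse_rtranclp_induct)
  case (step x x')
  then have "x \<notin> W" "adj8 x x'" by (auto simp: king_move_def)
  show ?case
  proof (cases "x' \<in> grid m")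
    case True
    then obtain y where "y \<in> grid_border m - W" "(king_move (grid m - W))\<^sup>*\<^sup>* x' y"
      using step by blast
    moreover have "king_move (grid m - W) x x'"
      using True step.hyps(1) step.prems(1) by (auto simp: king_move_def)
    ultimately show ?thesis by (meson converse_rtranclp_into_rtranclp)
  next
    case False
    have "x \<in> grid_border m"
      using step.prems(1) \<open>adj8 x x'\<close> False by (rule adj8_leaving_grid_imp_border)
    then show ?thesis using \<open>x \<notin> W\<close> by blast
  qed
qed simp

section \<open>Grid coordinates for the tiles\<close>

lemma cross2_add_right: "cross2 e (x + y) = cross2 e x + cross2 e y"
  by (simp add: cross2_def algebra_simps)

lemma cross2_scaleR_right: "cross2 e (r *\<^sub>R x) = r * cross2 e x"
  by (simp add: cross2_def algebra_simps)

lemma cross2_self [simp]: "cross2 e e = 0"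
  by (simp add: cross2_def)

text \<open>Grid coordinates of the lattice points: for p \<le> q the point lies in the triangle
  Q1 Q2 Q3, for q \<le> p in Q1 Q3 Q4, the two triangles meeting along the diagonal p = q.
  Cell (i, j) then corresponds to S_m(k) with k \<in> A1 above the diagonal (i < j), k \<in> A2
  below it and k \<in> A3 on it.\<close>
definition grid_point :: "nat \<Rightarrow> (nat \<Rightarrow> pt) \<Rightarrow> int \<Rightarrow> int \<Rightarrow> pt" where
  "grid_point m Q p q =
     (if p \<le> q then bpt m Q (nat (int m - q)) (nat (q - p)) (nat p) 0
      else bpt m Q (nat (int m - p)) 0 (nat q) (nat (p - q)))"

definition cell_quad :: "nat \<Rightarrow> (nat \<Rightarrow> pt) \<Rightarrow> cell \<Rightarrow> quad" where
  "cell_quad m Q c = (case c of (i, j) \<Rightarrow>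
     [grid_point m Q i j, grid_point m Q i (j + 1),
      grid_point m Q (i + 1) (j + 1), grid_point m Q (i + 1) j])"

definition cell_index :: "nat \<Rightarrow> cell \<Rightarrow> nat \<times> nat \<times> nat \<times> nat" where
  "cell_index m c = (case c of (i, j) \<Rightarrow>
     if i < j then (nat (int m - 1 - j), nat (j - i), nat i, 0)
     else if j < i then (nat (int m - 1 - i), 0, nat j, nat (i - j))
     else (nat (int m - 1 - i), 0, nat i, 0))"

lemma cell_index_in_quadA: "c \<in> grid m \<Longrightarrow> cell_index m c \<in> quadA m"
  by (cases c) (auto simp: cell_index_def grid_def quadA_def quadA1_def quadA2_def quadA3_def)

lemma quadA_eq_cell_index_image:
  assumes "m \<ge> 1"
  shows "quadA m = cell_index m ` grid m"
proof (intro equalityI subsetI)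
  show "k \<in> quadA m" if "k \<in> cell_index m ` grid m" for k
    using that cell_index_in_quadA by blast
next
  fix k assume "k \<in> quadA m"
  moreover obtain k1 k2 k3 k4 where k: "k = (k1, k2, k3, k4)" by (cases k)
  ultimately consider "k4 = 0" "k1 + k2 + k3 = m - 1" "k2 \<noteq> 0"
    | "k2 = 0" "k1 + k3 + k4 = m - 1" "k4 \<noteq> 0" | "k2 = 0" "k4 = 0" "k1 + k3 = m - 1"
    by (auto simp: quadA_def quadA1_def quadA2_def quadA3_def)
  then show "k \<in> cell_index m ` grid m"
  proof cases
    case 1
    then show ?thesis unfolding k
      by (intro image_eqI[of _ _ "(int k3, int k3 + int k2)"]) (auto simp: cell_index_def grid_def)
  next
    case 2
    then show ?thesis unfolding k
      by (intro image_eqI[of _ _ "(int k3 + int k4, int k3)"]) (auto simp: cell_index_def grid_def)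
  next
    case 3
    then show ?thesis unfolding k using assms
      by (intro image_eqI[of _ _ "(int k3, int k3)"]) (auto simp: cell_index_def grid_def)
  qed
qed

lemma Squad_cell_index:
  assumes "c \<in> grid m"
  shows "Squad m Q (cell_index m c) = cell_quad m Q c"
proof -
  obtain i j where ij: "c = (i, j)" by (cases c)
  have r: "0 \<le> i" "i < int m" "0 \<le> j" "j < int m" using assms ij by (auto simp: grid_def)
  consider "i < j" | "j < i" | "i = j" by linarith
  then show ?thesis
  proof cases
    case 1
    have "cell_index m c \<in> quadA1 m" using 1 r ij by (auto simp: cell_index_def quadA1_def)
    moreover have "Suc (nat (int m - (j + 1))) = nat (int m - j)"
      "Suc (nat (j - i)) = nat (j + 1 - i)"
      "Suc (nat i) = nat (i + 1)" "nat (j - i) - Suc 0 = nat (j - (i + 1))"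
      "nat (int m - 1 - j) = nat (int m - (j + 1))"
      using 1 r by auto
    ultimately show ?thesis using 1 ij r
      by (simp add: Squad_def cell_quad_def grid_point_def cell_index_def)
  next
    case 2
    have "cell_index m c \<notin> quadA1 m" "cell_index m c \<in> quadA2 m"
      using 2 r ij by (auto simp: cell_index_def quadA1_def quadA2_def)
    moreover have "Suc (nat (int m - (i + 1))) = nat (int m - i)"
      "Suc (nat (i - j)) = nat (i + 1 - j)"
      "Suc (nat j) = nat (j + 1)" "nat (i - j) - Suc 0 = nat (i - (j + 1))"
      "nat (int m - 1 - i) = nat (int m - (i + 1))"
      using 2 r by auto
    ultimately show ?thesis using 2 ij r
      by (cases "i = j + 1")
        (auto simp: Squad_def cell_quad_def grid_point_def cell_index_def numeral_2_eq_2)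
  next
    case 3
    have "cell_index m c \<notin> quadA1 m" "cell_index m c \<notin> quadA2 m"
      using 3 r ij by (auto simp: cell_index_def quadA1_def quadA2_def)
    moreover have "Suc (nat (int m - (i + 1))) = nat (int m - i)" "Suc (nat i) = nat (i + 1)"
      "nat (int m - 1 - i) = nat (int m - (i + 1))"
      using 3 r by auto
    ultimately show ?thesis using 3 ij r
      by (auto simp: Squad_def cell_quad_def grid_point_def cell_index_def)
  qed
qed

lemma Sset_eq_cell_quad_image: "m \<ge> 1 \<Longrightarrow> Sset m Q = cell_quad m Q ` grid m"
  unfolding Sset_def quadA_eq_cell_index_image image_image
  by (rule image_cong) (simp_all add: Squad_cell_index)

lemma bpt_minus_Q1:
  assumes "a + b + c + d = m" "m > 0"
  shows "bpt m Q a b c d - Q 1 =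
    (1 / real m) *\<^sub>R (real b *\<^sub>R (Q 2 - Q 1) + real c *\<^sub>R (Q 3 - Q 1) + real d *\<^sub>R (Q 4 - Q 1))"
proof -
  have a: "real a = real m - real b - real c - real d" using assms(1) by linarith
  show ?thesis using assms(2) unfolding bpt_def a by (simp add: prod_eq_iff field_simps)
qed

lemma grid_point_minus_Q1:
  assumes "m > 0" "p \<in> {0..int m}" "q \<in> {0..int m}"
  shows "grid_point m Q p q - Q 1 = (1 / real m) *\<^sub>R
    (if p \<le> q then of_int (q - p) *\<^sub>R (Q 2 - Q 1) + of_int p *\<^sub>R (Q 3 - Q 1)
     else of_int q *\<^sub>R (Q 3 - Q 1) + of_int (p - q) *\<^sub>R (Q 4 - Q 1))"
proof (cases "p \<le> q")
  case True
  have "nat (int m - q) + nat (q - p) + nat p + 0 = m" using True assms by auto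
  from bpt_minus_Q1[OF this assms(1), of Q] show ?thesis
    using True assms by (simp add: grid_point_def)
next
  case False
  have "nat (int m - p) + 0 + nat q + nat (p - q) = m" using False assms by auto
  from bpt_minus_Q1[OF this assms(1), of Q] show ?thesis
    using False assms by (simp add: grid_point_def)
qed

lemma grid_point_cross2:
  fixes Q :: "nat \<Rightarrow> pt"
  defines "X \<equiv> cross2 (Q 2 - Q 1) (Q 3 - Q 1)" and "Y \<equiv> cross2 (Q 3 - Q 1) (Q 4 - Q 1)"
  assumes "m > 0" "p \<in> {0..int m}" "q \<in> {0..int m}"
  shows "real m * cross2 (Q 3 - Q 1) (grid_point m Q p q - Q 1) =
      of_int (p - q) * (if p \<le> q then X else Y)"
    and "p \<le> q \<Longrightarrow> real m * cross2 (Q 2 - Q 1) (grid_point m Q p q - Q 1) = of_int p * X"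
    and "q < p \<Longrightarrow> real m * cross2 (Q 4 - Q 1) (grid_point m Q p q - Q 1) = - of_int q * Y"
proof -
  have expand: "real m * cross2 e (grid_point m Q p q - Q 1) =
      (if p \<le> q then of_int (q - p) * cross2 e (Q 2 - Q 1) + of_int p * cross2 e (Q 3 - Q 1)
       else of_int q * cross2 e (Q 3 - Q 1) + of_int (p - q) * cross2 e (Q 4 - Q 1))" for e
    unfolding grid_point_minus_Q1[OF assms(3-)]
    using assms(3) by (simp add: cross2_add_right cross2_scaleR_right)
  show "real m * cross2 (Q 3 - Q 1) (grid_point m Q p q - Q 1) =
      of_int (p - q) * (if p \<le> q then X else Y)"
    unfolding expand X_def Y_def by (simp add: cross2_def algebra_simps)
  show "p \<le> q \<Longrightarrow> real m * cross2 (Q 2 - Q 1) (grid_point m Q p q - Q 1) = of_int p * X"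
    unfolding expand X_def by (simp add: cross2_def algebra_simps)
  show "q < p \<Longrightarrow> real m * cross2 (Q 4 - Q 1) (grid_point m Q p q - Q 1) = - of_int q * Y"
    unfolding expand Y_def by (simp add: cross2_def algebra_simps)
qed

text \<open>The cross product with the diagonal Q1 Q3 is strictly increasing in p - q, since
  both triangles are positively oriented.\<close>
lemma grid_point_inj:
  assumes "convex_quad_ccw Q" "m > 0"
    and "p \<in> {0..int m}" "q \<in> {0..int m}" "p' \<in> {0..int m}" "q' \<in> {0..int m}"
    and eq: "grid_point m Q p q = grid_point m Q p' q'"
  shows "p = p' \<and> q = q'"
proof -
  have X: "cross2 (Q 2 - Q 1) (Q 3 - Q 1) > 0" and Y: "cross2 (Q 3 - Q 1) (Q 4 - Q 1) > 0"
    using assms(1) unfolding convex_quad_ccw_def by (simp_all add: cross2_def algebra_simps)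
  define f :: "int \<Rightarrow> real" where
    "f d = of_int d *
      (if d \<le> 0 then cross2 (Q 2 - Q 1) (Q 3 - Q 1) else cross2 (Q 3 - Q 1) (Q 4 - Q 1))" for d
  have f_mono: "f d < f d'" if "d < d'" for d d'
  proof -
    consider "d' \<le> 0" | "d \<le> 0" "0 < d'" | "0 < d" using \<open>d < d'\<close> by linarith
    then show ?thesis
    proof cases
      case 1
      then show ?thesis using that X by (simp add: f_def mult_strict_right_mono)
    next
      case 2
      then have "f d \<le> 0" using X by (simp add: f_def mult_nonpos_nonneg)
      moreover have "0 < f d'" using 2 Y by (simp add: f_def)
      ultimately show ?thesis by linarith
    next
      case 3
      then show ?thesis using that Y by (simp add: f_def mult_strict_right_mono)
    qed
  qed
  have diag: "f (a - b) = real m * cross2 (Q 3 - Q 1) (grid_point m Q a b - Q 1)"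
    if "a \<in> {0..int m}" "b \<in> {0..int m}" for a b
    unfolding f_def grid_point_cross2(1)[OF assms(2) that, where Q = Q] by simp
  have "f (p - q) = f (p' - q')"
    using diag[OF assms(3,4)] diag[OF assms(5,6)] eq by simp
  then have "p - q = p' - q'" using f_mono by (metis less_irrefl linorder_neqE)
  moreover have "p = p'" if "p \<le> q"
    using grid_point_cross2(2)[OF assms(2-4) that, where Q = Q]
      grid_point_cross2(2)[OF assms(2,5,6), where Q = Q]
      \<open>p - q = p' - q'\<close> that eq X by auto
  moreover have "q = q'" if "q < p"
    using grid_point_cross2(3)[OF assms(2-4) that, where Q = Q]
      grid_point_cross2(3)[OF assms(2,5,6), where Q = Q]
      \<open>p - q = p' - q'\<close> that eq Y by auto
  ultimately show ?thesis by linarith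
qed

lemma inj_on_cell_quad:
  assumes "convex_quad_ccw Q" "m > 0"
  shows "inj_on (cell_quad m Q) (grid m)"
proof (rule inj_onI)
  fix c d assume "c \<in> grid m" "d \<in> grid m" "cell_quad m Q c = cell_quad m Q d"
  then show "c = d"
    using grid_point_inj[OF assms, of "fst c" "snd c" "fst d" "snd d"]
    by (cases c, cases d) (auto simp: cell_quad_def grid_def)
qed

lemma cell_quad_common_side:
  assumes "adj4 c d"
  shows "common_side (cell_quad m Q c) (cell_quad m Q d)"
proof -
  obtain i j where c: "c = (i, j)" by (cases c)
  have "d \<in> {(i, j + 1), (i + 1, j), (i, j - 1), (i - 1, j)}"
    using assms c by (cases d) (auto simp: adj4_def abs_if split: if_splits)
  then obtain k where "k < 4" "side (cell_quad m Q c) k = side (cell_quad m Q d) ((k + 2) mod 4)"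
  proof (elim insertE emptyE)
    assume "d = (i, j + 1)"
    then show thesis using that[of 1] by (simp add: c side_def cell_quad_def closed_segment_commute)
  next
    assume "d = (i + 1, j)"
    then show thesis using that[of 2] by (simp add: c side_def cell_quad_def closed_segment_commute)
  next
    assume "d = (i, j - 1)"
    then show thesis using that[of 3] by (simp add: c side_def cell_quad_def closed_segment_commute)
  next
    assume "d = (i - 1, j)"
    then show thesis using that[of 0] by (simp add: c side_def cell_quad_def closed_segment_commute)
  qed
  then show ?thesis unfolding common_side_def by (metis mod_less_divisor zero_less_numeral)
qed

lemma length_cell_quad [simp]: "length (cell_quad m Q c) = 4"
  by (cases c) (simp add: cell_quad_def)

lemma cell_quad_common_vertex:
  assumes "adj8 c d"
  shows "common_vertex (cell_quad m Q c) (cell_quad m Q d)"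
proof -
  have corner: "grid_point m Q p q \<in> set (cell_quad m Q e)"
    if "p \<in> {fst e, fst e + 1}" "q \<in> {snd e, snd e + 1}" for p q e
    using that by (cases e) (auto simp: cell_quad_def)
  let ?v = "grid_point m Q (max (fst c) (fst d)) (max (snd c) (snd d))"
  have "?v \<in> set (cell_quad m Q c)" "?v \<in> set (cell_quad m Q d)"
    using assms by (auto intro!: corner simp: adj8_def abs_le_iff max_def)
  then show ?thesis unfolding common_vertex_def by (metis in_set_conv_nth length_cell_quad)
qed

section \<open>Tiles on the boundary of Q\<close>

lemma closed_segment_subset_frontier_convex_hull:
  assumes "finite P" "a \<in> P" "b \<in> P" "a \<noteq> b"
    and left: "\<And>x. x \<in> P \<Longrightarrow> cross2 (b - a) (x - a) \<ge> 0"
  shows "closed_segment a b \<subseteq> frontier (convex hull P)"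
proof
  fix x assume x: "x \<in> closed_segment a b"
  define n :: pt where "n = (- snd (b - a), fst (b - a))"
  have cross2_eq: "cross2 (b - a) (y - a) = n \<bullet> y - n \<bullet> a" for y
    by (simp add: n_def cross2_def inner_prod_def algebra_simps)
  have "n \<noteq> 0" using assms(4) by (auto simp: n_def prod_eq_iff)
  have "P \<subseteq> {y. n \<bullet> y \<ge> n \<bullet> a}" using left cross2_eq by fastforce
  then have hull_sub: "convex hull P \<subseteq> {y. n \<bullet> y \<ge> n \<bullet> a}"
    by (rule hull_minimal) (rule convex_halfspace_ge)
  have "interior (convex hull P) \<subseteq> {y. n \<bullet> y > n \<bullet> a}"
    using interior_mono[OF hull_sub] \<open>n \<noteq> 0\<close> by simp
  moreover obtain t where t: "x = (1 - t) *\<^sub>R a + t *\<^sub>R b" using x in_segment(1) by blast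
  have "n \<bullet> b = n \<bullet> a" using cross2_eq[of b] by simp
  then have "n \<bullet> x = n \<bullet> a" unfolding t by (simp add: inner_add_right algebra_simps)
  ultimately have "x \<notin> interior (convex hull P)" by auto
  moreover have "x \<in> convex hull P"
    using closed_segment_subset_convex_hull[OF hull_inc[OF assms(2)] hull_inc[OF assms(3)]] x
    by blast
  ultimately show "x \<in> frontier (convex hull P)"
    by (simp add: frontier_def closure_subset[THEN subsetD])
qed

lemma convex_quad_sides_frontier:
  assumes "convex_quad_ccw Q"
  defines "H \<equiv> frontier (convex hull {Q 1, Q 2, Q 3, Q 4})"
  shows "closed_segment (Q 1) (Q 2) \<subseteq> H" "closed_segment (Q 2) (Q 3) \<subseteq> H"
    "closed_segment (Q 3) (Q 4) \<subseteq> H" "closed_segment (Q 1) (Q 4) \<subseteq> H"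
proof -
  have turns: "cross2 (Q 2 - Q 1) (Q 3 - Q 2) > 0" "cross2 (Q 3 - Q 2) (Q 4 - Q 3) > 0"
     "cross2 (Q 4 - Q 3) (Q 1 - Q 4) > 0" "cross2 (Q 1 - Q 4) (Q 2 - Q 1) > 0"
    using assms(1) by (auto simp: convex_quad_ccw_def)
  then have "Q 1 \<noteq> Q 2" "Q 2 \<noteq> Q 3" "Q 3 \<noteq> Q 4" "Q 4 \<noteq> Q 1"
    by (auto simp: cross2_def)
  note edge = closed_segment_subset_frontier_convex_hull[of "{Q 1, Q 2, Q 3, Q 4}", folded H_def]
  show "closed_segment (Q 1) (Q 2) \<subseteq> H" "closed_segment (Q 2) (Q 3) \<subseteq> H"
    "closed_segment (Q 3) (Q 4) \<subseteq> H"
    by (rule edge; use turns \<open>Q 1 \<noteq> Q 2\<close> \<open>Q 2 \<noteq> Q 3\<close> \<open>Q 3 \<noteq> Q 4\<close> in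
        \<open>auto simp: cross2_def algebra_simps\<close>)+
  have "closed_segment (Q 4) (Q 1) \<subseteq> H"
    by (rule edge; use turns \<open>Q 4 \<noteq> Q 1\<close> in \<open>auto simp: cross2_def algebra_simps\<close>)
  then show "closed_segment (Q 1) (Q 4) \<subseteq> H" by (simp add: closed_segment_commute)
qed

lemma in_closed_segment_offsetI:
  "x - c = (a - c) + t *\<^sub>R (b - a) \<Longrightarrow> 0 \<le> t \<Longrightarrow> t \<le> 1 \<Longrightarrow> x \<in> closed_segment a b"
  unfolding in_segment(1) by (intro exI[of _ t]) (simp add: algebra_simps)

lemma grid_point_on_sides:
  assumes "m > 0" "r \<in> {0..int m}"
  shows "grid_point m Q 0 r \<in> closed_segment (Q 1) (Q 2)"
    and "grid_point m Q r (int m) \<in> closed_segment (Q 2) (Q 3)"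
    and "grid_point m Q (int m) r \<in> closed_segment (Q 3) (Q 4)"
    and "grid_point m Q r 0 \<in> closed_segment (Q 1) (Q 4)"
proof -
  let ?t = "of_int r / real m"
  note on_segment = in_closed_segment_offsetI[where c = "Q 1"]
  show "grid_point m Q 0 r \<in> closed_segment (Q 1) (Q 2)"
    by (rule on_segment[where t = ?t]; (subst grid_point_minus_Q1)?;
        use assms in \<open>auto simp: prod_eq_iff field_simps\<close>)
  show "grid_point m Q r (int m) \<in> closed_segment (Q 2) (Q 3)"
    by (rule on_segment[where t = ?t]; (subst grid_point_minus_Q1)?;
        use assms in \<open>auto simp: prod_eq_iff field_simps\<close>)
  show "grid_point m Q (int m) r \<in> closed_segment (Q 3) (Q 4)"
    by (rule on_segment[where t = "1 - ?t"]; (subst grid_point_minus_Q1)?;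
        use assms in \<open>auto simp: prod_eq_iff field_simps\<close>)
  show "grid_point m Q r 0 \<in> closed_segment (Q 1) (Q 4)"
    by (rule on_segment[where t = ?t]; (subst grid_point_minus_Q1)?;
        use assms in \<open>auto simp: prod_eq_iff field_simps\<close>)
qed

lemma border_cell_side_on_frontier:
  assumes "convex_quad_ccw Q" "m > 0" "c \<in> grid_border m"
  shows "\<exists>k<4. side (cell_quad m Q c) k \<subseteq> frontier (convex hull {Q 1, Q 2, Q 3, Q 4})"
proof -
  obtain i j where c: "c = (i, j)" by (cases c)
  have ij: "i \<in> {0..int m}" "i + 1 \<in> {0..int m}" "j \<in> {0..int m}" "j + 1 \<in> {0..int m}"
    using assms(3) by (auto simp: c grid_border_def grid_def)
  have sub: "closed_segment x y \<subseteq> closed_segment a b"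
    if "x \<in> closed_segment a b" "y \<in> closed_segment a b" for x y a b :: pt
    using that by (simp add: closed_segment_subset)
  note on_side = grid_point_on_sides[OF assms(2), where Q = Q]
  note frontier = convex_quad_sides_frontier[OF assms(1)]
  have side_on_edge: ?thesis
    if "k < 4" "side (cell_quad m Q c) k \<subseteq> S"
      "S \<subseteq> frontier (convex hull {Q 1, Q 2, Q 3, Q 4})" for k S
    using that by blast
  consider "i = 0" | "j = int m - 1" | "i = int m - 1" | "j = 0"
    using assms(3) by (auto simp: c grid_border_def)
  then show ?thesis
  proof cases
    case 1
    show ?thesis
      by (rule side_on_edge[of 0, OF _ _ frontier(1)])
        (use 1 ij on_side(1) in \<open>simp_all add: c side_def cell_quad_def sub\<close>)
  next
    case 2
    show ?thesis
      by (rule side_on_edge[of 1, OF _ _ frontier(2)])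
        (use 2 ij on_side(2) in \<open>simp_all add: c side_def cell_quad_def sub\<close>)
  next
    case 3
    show ?thesis
      by (rule side_on_edge[of 2, OF _ _ frontier(3)])
        (use 3 ij on_side(3) in \<open>simp_all add: c side_def cell_quad_def sub\<close>)
  next
    case 4
    show ?thesis
      by (rule side_on_edge[of 3, OF _ _ frontier(4)])
        (use 4 ij on_side(4) in \<open>simp_all add: c side_def cell_quad_def sub\<close>)
  qed
qed

lemma grid_subset_framed_grid: "grid m \<subseteq> framed_grid m"
  by (auto simp: grid_def framed_grid_def)

lemma adjW_cell_quad:
  assumes "convex_quad_ccw Q" "m > 0" "c \<in> grid m" "d \<in> grid m" "adj4 c d"
  shows "adjW (cell_quad m Q c) (cell_quad m Q d)"
proof -
  have "c \<noteq> d" using assms(5) by (auto simp: adj4_def)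
  then show ?thesis
    using inj_on_cell_quad[OF assms(1,2)] assms(3-5) cell_quad_common_side
    by (auto simp: adjW_def dest: inj_onD)
qed

lemma adjB_cell_quad:
  assumes "convex_quad_ccw Q" "m > 0" "c \<in> grid m" "d \<in> grid m" "adj8 c d"
  shows "adjB (cell_quad m Q c) (cell_quad m Q d)"
proof -
  have "c \<noteq> d" using assms(5) by (auto simp: adj8_def)
  then show ?thesis
    using inj_on_cell_quad[OF assms(1,2)] assms(3-5) cell_quad_common_vertex
    by (auto simp: adjB_def dest: inj_onD)
qed

lemma acyclic_cells_of_acyclic_tiles:
  assumes "convex_quad_ccw Q" "m > 0" "\<not> has_cycle W adjW"
  shows "\<not> has_cycle {c \<in> grid m. cell_quad m Q c \<in> W} adj4"
proof
  assume "has_cycle {c \<in> grid m. cell_quad m Q c \<in> W} adj4"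
  then have "has_cycle W adjW"
  proof (rule has_cycle_map)
    show "inj_on (cell_quad m Q) {c \<in> grid m. cell_quad m Q c \<in> W}"
      using inj_on_cell_quad[OF assms(1,2)] by (rule inj_on_subset) blast
  qed (use adjW_cell_quad[OF assms(1,2)] in auto)
  then show False using assms(3) by contradiction
qed

lemma tile_path_of_king_walk:
  assumes "convex_quad_ccw Q" "m > 0"
    and walk: "(king_move (grid m - {c \<in> grid m. cell_quad m Q c \<in> W}))\<^sup>*\<^sup>* b y"
    and b: "b \<in> grid m" "cell_quad m Q b \<notin> W"
  shows "\<exists>ps. is_gpath (Sset m Q - W) adjB ps \<and>
    hd ps = cell_quad m Q b \<and> last ps = cell_quad m Q y"
proof -
  let ?C = "grid m - {c \<in> grid m. cell_quad m Q c \<in> W}"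
  have "\<exists>ps. is_gpath ?C adj8 ps \<and> hd ps = b \<and> last ps = y"
    by (rule rtranclp_imp_gpath[OF walk]) (use b in \<open>auto simp: king_move_def\<close>)
  then obtain ps where ps: "is_gpath ?C adj8 ps" "hd ps = b" "last ps = y"
    by blast
  have "is_gpath (Sset m Q - W) adjB (map (cell_quad m Q) ps)"
  proof (rule is_gpath_map[OF ps(1)])
    show "inj_on (cell_quad m Q) ?C"
      using inj_on_cell_quad[OF assms(1,2)] by (rule inj_on_subset) blast
    show "cell_quad m Q ` ?C \<subseteq> Sset m Q - W"
      using Sset_eq_cell_quad_image[of m Q] assms(2) by auto
  qed (use adjB_cell_quad[OF assms(1,2)] in auto)
  moreover have "ps \<noteq> []" using ps(1) by (simp add: is_gpath_def)
  ultimately show ?thesis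
    using ps(2,3) by (intro exI[of _ "map (cell_quad m Q) ps"]) (simp add: hd_map last_map)
qed

theorem proposition4p1:
  fixes Q :: "nat \<Rightarrow> real \<times> real" and m :: nat and W :: "quad set"
  assumes "convex_quad_ccw Q"
    and "dist (Q 1) (Q 3) \<le> dist (Q 2) (Q 4)"
    and "m \<ge> 2"
    and "W \<subseteq> Sset m Q"
    and "is_tree W adjW"
    and "B \<in> Sset m Q - W"
  shows "\<exists>ps. is_gpath (Sset m Q - W) adjB ps \<and> hd ps = B \<and> border_quad m Q (last ps)"
proof -
  have m: "m > 0" and Sset: "Sset m Q = cell_quad m Q ` grid m"
    using assms(3) Sset_eq_cell_quad_image[of m Q] by auto
  define Wc where "Wc = {c \<in> grid m. cell_quad m Q c \<in> W}"
  have "\<not> has_cycle Wc adj4"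
    using acyclic_cells_of_acyclic_tiles[OF assms(1) m] assms(5) by (simp add: Wc_def is_tree_def)
  moreover obtain b where b: "b \<in> grid m - Wc" "cell_quad m Q b = B"
    using assms(6) Sset by (auto simp: Wc_def)
  ultimately obtain f where "f \<notin> grid m" "(king_move (framed_grid m - Wc))\<^sup>*\<^sup>* b f"
    using escape_through_acyclic[of Wc m b] grid_subset_framed_grid by (auto simp: Wc_def)
  then obtain y where y: "y \<in> grid_border m - Wc" "(king_move (grid m - Wc))\<^sup>*\<^sup>* b y"
    using escape_reaches_border b(1) by blast
  moreover have "border_quad m Q (cell_quad m Q y)"
    using y(1) Sset border_cell_side_on_frontier[OF assms(1) m]
    by (auto simp: border_quad_def grid_border_def)
  ultimately show ?thesis
    using tile_path_of_king_walk[OF assms(1) m, of W b y] b by (auto simp: Wc_def)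
qed

end
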